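(* Suppose $V \models \mathsf{ZF}^- + \mathsf{DC}_\mu$-Scheme, where $\mu$ is an infinite cardinal. Then for any proper class $\mathcal{C}$ definable (with parameters) over $V$, there is a subset $b \subseteq \mathcal{C}$ of cardinality $\mu$.
   Context: $\mathsf{ZF}^-$ denotes $\mathsf{ZF}$ without Power Set, with the Collection Scheme (plus Empty Set, Extensionality, Pairing, Union, Infinity, Foundation, Separation and Replacement Schemes). For an infinite cardinal $\mu$, the $\mathsf{DC}_\mu$-Scheme is the scheme: for all formulas $\varphi,\psi$ and sets $u,w$, if there is $y$ with $\psi(y,u)$ and for every $\alpha < \mu$ and every sequence $s = \langle x_\beta : \beta < \alpha\rangle$ with $\psi(x_\beta,u)$ for all $\beta$ there is $z$ with $\psi(z,u)$ and $\varphi(s,z,w)$, then there is a function $f$ with domain $\mu$ such that for each $\alpha < \mu$, $\psi(f(\alpha),u)$ and $\varphi(f\restriction\alpha, f(\alpha), w)$. *)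

theory Defs
  imports Main
begin

datatype form =
    FMem nat nat
  | FEq nat nat
  | FNeg form
  | FConj form form
  | FEx nat form

primrec sat :: "'a set \<Rightarrow> ('a \<Rightarrow> 'a \<Rightarrow> bool) \<Rightarrow> form \<Rightarrow> (nat \<Rightarrow> 'a) \<Rightarrow> bool" where
  "sat M E (FMem i j) s = E (s i) (s j)"
| "sat M E (FEq i j) s = (s i = s j)"
| "sat M E (FNeg \<phi>) s = (\<not> sat M E \<phi> s)"
| "sat M E (FConj \<phi> \<psi>) s = (sat M E \<phi> s \<and> sat M E \<psi> s)"
| "sat M E (FEx i \<phi>) s = (\<exists>a\<in>M. sat M E \<phi> (s(i := a)))"

definition assignment :: "'a set \<Rightarrow> (nat \<Rightarrow> 'a) \<Rightarrow> bool" where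
  "assignment M s \<longleftrightarrow> (\<forall>i. s i \<in> M)"

definition is_empty :: "'a set \<Rightarrow> ('a \<Rightarrow> 'a \<Rightarrow> bool) \<Rightarrow> 'a \<Rightarrow> bool" where
  "is_empty M E x \<longleftrightarrow> (\<forall>z\<in>M. \<not> E z x)"

definition is_upair :: "'a set \<Rightarrow> ('a \<Rightarrow> 'a \<Rightarrow> bool) \<Rightarrow> 'a \<Rightarrow> 'a \<Rightarrow> 'a \<Rightarrow> bool" where
  "is_upair M E z a b \<longleftrightarrow> (\<forall>w\<in>M. E w z \<longleftrightarrow> (w = a \<or> w = b))"

text \<open>Kuratowski ordered pair: p = {{a},{a,b}}.\<close>
definition is_opair :: "'a set \<Rightarrow> ('a \<Rightarrow> 'a \<Rightarrow> bool) \<Rightarrow> 'a \<Rightarrow> 'a \<Rightarrow> 'a \<Rightarrow> bool" where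
  "is_opair M E p a b \<longleftrightarrow>
     (\<exists>c\<in>M. \<exists>d\<in>M. is_upair M E c a a \<and> is_upair M E d a b \<and> is_upair M E p c d)"

definition is_succ :: "'a set \<Rightarrow> ('a \<Rightarrow> 'a \<Rightarrow> bool) \<Rightarrow> 'a \<Rightarrow> 'a \<Rightarrow> bool" where
  "is_succ M E x y \<longleftrightarrow> (\<forall>z\<in>M. E z x \<longleftrightarrow> (E z y \<or> z = y))"

definition in_graph :: "'a set \<Rightarrow> ('a \<Rightarrow> 'a \<Rightarrow> bool) \<Rightarrow> 'a \<Rightarrow> 'a \<Rightarrow> 'a \<Rightarrow> bool" where
  "in_graph M E f a b \<longleftrightarrow> (\<exists>p\<in>M. E p f \<and> is_opair M E p a b)"

definition is_function :: "'a set \<Rightarrow> ('a \<Rightarrow> 'a \<Rightarrow> bool) \<Rightarrow> 'a \<Rightarrow> bool" where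
  "is_function M E f \<longleftrightarrow>
     (\<forall>p\<in>M. E p f \<longrightarrow> (\<exists>a\<in>M. \<exists>b\<in>M. is_opair M E p a b)) \<and>
     (\<forall>a\<in>M. \<forall>b\<in>M. \<forall>b'\<in>M. in_graph M E f a b \<and> in_graph M E f a b' \<longrightarrow> b = b')"

definition has_domain :: "'a set \<Rightarrow> ('a \<Rightarrow> 'a \<Rightarrow> bool) \<Rightarrow> 'a \<Rightarrow> 'a \<Rightarrow> bool" where
  "has_domain M E f d \<longleftrightarrow> (\<forall>a\<in>M. E a d \<longleftrightarrow> (\<exists>b\<in>M. in_graph M E f a b))"

definition is_restriction :: "'a set \<Rightarrow> ('a \<Rightarrow> 'a \<Rightarrow> bool) \<Rightarrow> 'a \<Rightarrow> 'a \<Rightarrow> 'a \<Rightarrow> bool" where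
  "is_restriction M E g f x \<longleftrightarrow>
     (\<forall>p\<in>M. E p g \<longleftrightarrow> (E p f \<and> (\<exists>a\<in>M. \<exists>b\<in>M. is_opair M E p a b \<and> E a x)))"

definition is_bijection :: "'a set \<Rightarrow> ('a \<Rightarrow> 'a \<Rightarrow> bool) \<Rightarrow> 'a \<Rightarrow> 'a \<Rightarrow> 'a \<Rightarrow> bool" where
  "is_bijection M E f x y \<longleftrightarrow>
     is_function M E f \<and> has_domain M E f x \<and>
     (\<forall>b\<in>M. E b y \<longleftrightarrow> (\<exists>a\<in>M. in_graph M E f a b)) \<and>
     (\<forall>a\<in>M. \<forall>a'\<in>M. \<forall>b\<in>M. in_graph M E f a b \<and> in_graph M E f a' b \<longrightarrow> a = a')"

definition equipotent :: "'a set \<Rightarrow> ('a \<Rightarrow> 'a \<Rightarrow> bool) \<Rightarrow> 'a \<Rightarrow> 'a \<Rightarrow> bool" where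
  "equipotent M E x y \<longleftrightarrow> (\<exists>f\<in>M. is_bijection M E f x y)"

text \<open>Ordinal: transitive set linearly ordered by membership (well-foundedness is
  provided by the Foundation axiom in the models considered).\<close>
definition is_ordinal :: "'a set \<Rightarrow> ('a \<Rightarrow> 'a \<Rightarrow> bool) \<Rightarrow> 'a \<Rightarrow> bool" where
  "is_ordinal M E x \<longleftrightarrow>
     (\<forall>y\<in>M. \<forall>z\<in>M. E y x \<and> E z y \<longrightarrow> E z x) \<and>
     (\<forall>y\<in>M. \<forall>z\<in>M. E y x \<and> E z x \<longrightarrow> (E y z \<or> y = z \<or> E z y))"

definition is_nat :: "'a set \<Rightarrow> ('a \<Rightarrow> 'a \<Rightarrow> bool) \<Rightarrow> 'a \<Rightarrow> bool" where
  "is_nat M E n \<longleftrightarrow> is_ordinal M E n \<and>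
     (\<forall>x\<in>M. (x = n \<or> E x n) \<longrightarrow> (is_empty M E x \<or> (\<exists>y\<in>M. is_succ M E x y)))"

definition is_omega :: "'a set \<Rightarrow> ('a \<Rightarrow> 'a \<Rightarrow> bool) \<Rightarrow> 'a \<Rightarrow> bool" where
  "is_omega M E w \<longleftrightarrow> (\<forall>x\<in>M. E x w \<longleftrightarrow> is_nat M E x)"

definition is_cardinal :: "'a set \<Rightarrow> ('a \<Rightarrow> 'a \<Rightarrow> bool) \<Rightarrow> 'a \<Rightarrow> bool" where
  "is_cardinal M E k \<longleftrightarrow> is_ordinal M E k \<and> (\<forall>b\<in>M. E b k \<longrightarrow> \<not> equipotent M E b k)"

definition is_infinite_cardinal :: "'a set \<Rightarrow> ('a \<Rightarrow> 'a \<Rightarrow> bool) \<Rightarrow> 'a \<Rightarrow> bool" where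
  "is_infinite_cardinal M E k \<longleftrightarrow> is_cardinal M E k \<and>
     (\<exists>w\<in>M. is_omega M E w \<and> (w = k \<or> E w k))"

definition zf_minus :: "'a set \<Rightarrow> ('a \<Rightarrow> 'a \<Rightarrow> bool) \<Rightarrow> bool" where
  "zf_minus M E \<longleftrightarrow>
     \<comment> \<open>Extensionality\<close>
     (\<forall>x\<in>M. \<forall>y\<in>M. (\<forall>z\<in>M. E z x \<longleftrightarrow> E z y) \<longrightarrow> x = y) \<and>
     \<comment> \<open>Empty Set\<close>
     (\<exists>x\<in>M. is_empty M E x) \<and>
     \<comment> \<open>Pairing\<close>
     (\<forall>a\<in>M. \<forall>b\<in>M. \<exists>c\<in>M. is_upair M E c a b) \<and>
     \<comment> \<open>Union\<close>
     (\<forall>x\<in>M. \<exists>u\<in>M. \<forall>z\<in>M. E z u \<longleftrightarrow> (\<exists>y\<in>M. E z y \<and> E y x)) \<and>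
     \<comment> \<open>Infinity\<close>
     (\<exists>x\<in>M. (\<exists>e\<in>M. E e x \<and> is_empty M E e) \<and>
             (\<forall>y\<in>M. E y x \<longrightarrow> (\<exists>sy\<in>M. E sy x \<and> is_succ M E sy y))) \<and>
     \<comment> \<open>Foundation\<close>
     (\<forall>x\<in>M. (\<exists>y\<in>M. E y x) \<longrightarrow> (\<exists>y\<in>M. E y x \<and> (\<forall>z\<in>M. \<not> (E z y \<and> E z x)))) \<and>
     \<comment> \<open>Separation Scheme (the separated variable is 0; parameters come from s)\<close>
     (\<forall>\<phi> s. assignment M s \<longrightarrow>
        (\<forall>x\<in>M. \<exists>y\<in>M. \<forall>z\<in>M. E z y \<longleftrightarrow> (E z x \<and> sat M E \<phi> (s(0 := z))))) \<and>
     \<comment> \<open>Replacement Scheme (variables 0 and 1 are the argument and value)\<close>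
     (\<forall>\<phi> s. assignment M s \<longrightarrow>
        (\<forall>x\<in>M. (\<forall>a\<in>M. E a x \<longrightarrow> (\<exists>!b. b \<in> M \<and> sat M E \<phi> (s(0 := a, 1 := b)))) \<longrightarrow>
           (\<exists>y\<in>M. \<forall>b\<in>M. E b y \<longleftrightarrow> (\<exists>a\<in>M. E a x \<and> sat M E \<phi> (s(0 := a, 1 := b)))))) \<and>
     \<comment> \<open>Collection Scheme\<close>
     (\<forall>\<phi> s. assignment M s \<longrightarrow>
        (\<forall>x\<in>M. (\<forall>a\<in>M. E a x \<longrightarrow> (\<exists>b\<in>M. sat M E \<phi> (s(0 := a, 1 := b)))) \<longrightarrow>
           (\<exists>y\<in>M. \<forall>a\<in>M. E a x \<longrightarrow> (\<exists>b\<in>M. E b y \<and> sat M E \<phi> (s(0 := a, 1 := b))))))"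

text \<open>\<psi>(y,u) is evaluated as sat \<psi> (s(0:=y)); \<phi>(seq,z,w) as sat \<phi> (s(0:=seq,1:=z));
  the parameters u, w are supplied by the assignment s.\<close>

definition dc_scheme :: "'a set \<Rightarrow> ('a \<Rightarrow> 'a \<Rightarrow> bool) \<Rightarrow> 'a \<Rightarrow> bool" where
  "dc_scheme M E \<mu> \<longleftrightarrow>
    (\<forall>\<phi> \<psi> s. assignment M s \<longrightarrow>
      ((\<exists>y\<in>M. sat M E \<psi> (s(0 := y))) \<and>
       (\<forall>\<alpha>\<in>M. E \<alpha> \<mu> \<longrightarrow>
          (\<forall>sq\<in>M. is_function M E sq \<and> has_domain M E sq \<alpha> \<and>
                   (\<forall>\<beta>\<in>M. \<forall>x\<in>M. in_graph M E sq \<beta> x \<longrightarrow> sat M E \<psi> (s(0 := x))) \<longrightarrow>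
             (\<exists>z\<in>M. sat M E \<psi> (s(0 := z)) \<and> sat M E \<phi> (s(0 := sq, 1 := z)))))
       \<longrightarrow>
       (\<exists>f\<in>M. is_function M E f \<and> has_domain M E f \<mu> \<and>
          (\<forall>\<alpha>\<in>M. E \<alpha> \<mu> \<longrightarrow>
             (\<exists>g\<in>M. \<exists>z\<in>M. in_graph M E f \<alpha> z \<and> is_restriction M E g f \<alpha> \<and>
                sat M E \<psi> (s(0 := z)) \<and> sat M E \<phi> (s(0 := g, 1 := z)))))))"

text \<open>The class defined by \<chi> with parameters s: {x \<in> M. M \<Turnstile> \<chi>[s(0:=x)]}.
  It is a proper class if it is not the extension of any element of M.\<close>
definition proper_class :: "'a set \<Rightarrow> ('a \<Rightarrow> 'a \<Rightarrow> bool) \<Rightarrow> ('a \<Rightarrow> bool) \<Rightarrow> bool" where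
  "proper_class M E C \<longleftrightarrow> \<not> (\<exists>y\<in>M. \<forall>x\<in>M. E x y \<longleftrightarrow> C x)"

end

theory Submission
  imports Defs
begin

text \<open>Apply \<open>DC\<^sub>\<mu>\<close> to the class \<open>\<C>\<close> with the relation ``\<open>z\<close> is not in the range of the
  sequence built so far''. Its hypothesis holds because the range of a set-sized sequence is a set
  (Union twice) and a proper class cannot be contained in a set (Separation). The resulting
  \<open>f : \<mu> \<rightarrow> \<C>\<close> is injective since \<open>\<mu>\<close> is linearly ordered by \<open>\<in>\<close>, so its range \<open>b \<subseteq> \<C>\<close>
  is in bijection with \<open>\<mu>\<close> via the converse of \<open>f\<close>, which exists by Collection and Separation.\<close>

definition FAll :: "nat \<Rightarrow> form \<Rightarrow> form" where
  "FAll i \<phi> = FNeg (FEx i (FNeg \<phi>))"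

definition FOr :: "form \<Rightarrow> form \<Rightarrow> form" where
  "FOr \<phi> \<psi> = FNeg (FConj (FNeg \<phi>) (FNeg \<psi>))"

definition FIff :: "form \<Rightarrow> form \<Rightarrow> form" where
  "FIff \<phi> \<psi> = FConj (FNeg (FConj \<phi> (FNeg \<psi>))) (FNeg (FConj \<psi> (FNeg \<phi>)))"

text \<open>The last arguments of the following formulas are the bound variables they use.\<close>

definition upair_fm :: "nat \<Rightarrow> nat \<Rightarrow> nat \<Rightarrow> nat \<Rightarrow> form" where
  "upair_fm z a b w = FAll w (FIff (FMem w z) (FOr (FEq w a) (FEq w b)))"

definition opair_fm :: "nat \<Rightarrow> nat \<Rightarrow> nat \<Rightarrow> nat \<Rightarrow> nat \<Rightarrow> nat \<Rightarrow> form" where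
  "opair_fm p a b c d w =
     FEx c (FEx d (FConj (upair_fm c a a w) (FConj (upair_fm d a b w) (upair_fm p c d w))))"

definition in_graph_fm :: "nat \<Rightarrow> nat \<Rightarrow> nat \<Rightarrow> nat \<Rightarrow> nat \<Rightarrow> nat \<Rightarrow> nat \<Rightarrow> form" where
  "in_graph_fm f a b q c d w = FEx q (FConj (FMem q f) (opair_fm q a b c d w))"

lemma sat_upair_fm:
  "w \<noteq> z \<Longrightarrow> w \<noteq> a \<Longrightarrow> w \<noteq> b \<Longrightarrow>
   sat M E (upair_fm z a b w) s = is_upair M E (s z) (s a) (s b)"
  by (auto simp: upair_fm_def FAll_def FIff_def FOr_def is_upair_def)

lemma sat_opair_fm:
  "c \<noteq> d \<Longrightarrow> w \<noteq> c \<Longrightarrow> w \<noteq> d \<Longrightarrow> w \<noteq> a \<Longrightarrow> w \<noteq> b \<Longrightarrow> w \<noteq> p \<Longrightarrow>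
   a \<noteq> c \<Longrightarrow> a \<noteq> d \<Longrightarrow> b \<noteq> c \<Longrightarrow> b \<noteq> d \<Longrightarrow> p \<noteq> c \<Longrightarrow> p \<noteq> d \<Longrightarrow>
   sat M E (opair_fm p a b c d w) s = is_opair M E (s p) (s a) (s b)"
  by (simp add: opair_fm_def sat_upair_fm is_opair_def)

lemma sat_in_graph_fm:
  "q \<noteq> f \<Longrightarrow> q \<noteq> a \<Longrightarrow> q \<noteq> b \<Longrightarrow>
   c \<noteq> d \<Longrightarrow> w \<noteq> c \<Longrightarrow> w \<noteq> d \<Longrightarrow> w \<noteq> a \<Longrightarrow> w \<noteq> b \<Longrightarrow> w \<noteq> q \<Longrightarrow>
   a \<noteq> c \<Longrightarrow> a \<noteq> d \<Longrightarrow> b \<noteq> c \<Longrightarrow> b \<noteq> d \<Longrightarrow> q \<noteq> c \<Longrightarrow> q \<noteq> d \<Longrightarrow>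
   sat M E (in_graph_fm f a b q c d w) s = in_graph M E (s f) (s a) (s b)"
  by (simp add: in_graph_fm_def sat_opair_fm in_graph_def)

lemma is_opair_inject:
  assumes "a \<in> M" "b \<in> M" "a' \<in> M" "b' \<in> M"
    and "is_opair M E p a b" "is_opair M E p a' b'"
  shows "a = a' \<and> b = b'"
  using assms unfolding is_opair_def is_upair_def by metis

lemma zf_minus_separation:
  assumes "zf_minus M E" "assignment M s" "x \<in> M"
  shows "\<exists>y\<in>M. \<forall>z\<in>M. E z y \<longleftrightarrow> (E z x \<and> sat M E \<phi> (s(0 := z)))"
  using assms by (simp add: zf_minus_def)

lemma zf_minus_collection:
  assumes "zf_minus M E" "assignment M s" "x \<in> M"
    and "\<forall>a\<in>M. E a x \<longrightarrow> (\<exists>b\<in>M. sat M E \<phi> (s(0 := a, 1 := b)))"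
  shows "\<exists>y\<in>M. \<forall>a\<in>M. E a x \<longrightarrow> (\<exists>b\<in>M. E b y \<and> sat M E \<phi> (s(0 := a, 1 := b)))"
  using assms unfolding zf_minus_def by blast

lemma zf_minus_opair_exists:
  assumes "zf_minus M E" "a \<in> M" "b \<in> M"
  shows "\<exists>p\<in>M. is_opair M E p a b"
proof -
  have pairing: "\<forall>a\<in>M. \<forall>b\<in>M. \<exists>c\<in>M. is_upair M E c a b"
    using assms(1) by (simp add: zf_minus_def)
  obtain c where "c \<in> M" "is_upair M E c a a" using pairing assms by blast
  moreover obtain d where "d \<in> M" "is_upair M E d a b" using pairing assms by blast
  moreover obtain p where "p \<in> M" "is_upair M E p c d" using pairing calculation by blast
  ultimately show ?thesis unfolding is_opair_def by blast
qed

text \<open>The values of \<open>f\<close> lie in \<open>\<Union>\<Union>f\<close>.\<close>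

lemma zf_minus_range_bounded:
  assumes "zf_minus M E" "f \<in> M"
  shows "\<exists>u\<in>M. \<forall>a z. z \<in> M \<longrightarrow> in_graph M E f a z \<longrightarrow> E z u"
proof -
  have union: "\<forall>x\<in>M. \<exists>u\<in>M. \<forall>z\<in>M. E z u \<longleftrightarrow> (\<exists>y\<in>M. E z y \<and> E y x)"
    using assms(1) by (simp add: zf_minus_def)
  obtain u1 where u1: "u1 \<in> M" "\<forall>z\<in>M. E z u1 \<longleftrightarrow> (\<exists>y\<in>M. E z y \<and> E y f)"
    using union assms(2) by blast
  obtain u2 where u2: "u2 \<in> M" "\<forall>z\<in>M. E z u2 \<longleftrightarrow> (\<exists>y\<in>M. E z y \<and> E y u1)"
    using union u1(1) by blast
  have "E z u2" if z: "z \<in> M" and fz: "in_graph M E f a z" for a z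
  proof -
    obtain p c d where "p \<in> M" "E p f" "c \<in> M" "d \<in> M"
        "is_upair M E d a z" "is_upair M E p c d"
      using fz unfolding in_graph_def is_opair_def by blast
    then have "E z d" "E d p" using z unfolding is_upair_def by auto
    then show ?thesis using u1 u2 \<open>p \<in> M\<close> \<open>d \<in> M\<close> \<open>E p f\<close> z by blast
  qed
  then show ?thesis using u2(1) by blast
qed

lemma zf_minus_range_exists:
  assumes "zf_minus M E" "f \<in> M"
  shows "\<exists>b\<in>M. \<forall>z\<in>M. E z b \<longleftrightarrow> (\<exists>a\<in>M. in_graph M E f a z)"
proof -
  obtain u where u: "u \<in> M" "\<forall>a z. z \<in> M \<longrightarrow> in_graph M E f a z \<longrightarrow> E z u"
    using zf_minus_range_bounded[OF assms] by blast
  have s: "assignment M (\<lambda>_. f)" using assms(2) by (simp add: assignment_def)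
  have sat_range: "sat M E (FEx 2 (in_graph_fm 1 2 0 3 4 5 6)) ((\<lambda>_. f)(0 := z))
      \<longleftrightarrow> (\<exists>a\<in>M. in_graph M E f a z)" for z
    by (simp add: sat_in_graph_fm)
  show ?thesis
    using zf_minus_separation[OF assms(1) s u(1), of "FEx 2 (in_graph_fm 1 2 0 3 4 5 6)"] u(2)
    unfolding sat_range by blast
qed

lemma zf_minus_converse_exists:
  assumes zf: "zf_minus M E" and "f \<in> M"
    and pairs: "\<forall>p\<in>M. E p f \<longrightarrow> (\<exists>a\<in>M. \<exists>z\<in>M. is_opair M E p a z)"
  shows "\<exists>h\<in>M. (\<forall>q\<in>M. E q h \<longrightarrow> (\<exists>z\<in>M. \<exists>a\<in>M. is_opair M E q z a)) \<and>
           (\<forall>z\<in>M. \<forall>a\<in>M. in_graph M E h z a \<longleftrightarrow> in_graph M E f a z)"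
proof -
  have s: "assignment M (\<lambda>_. f)" using \<open>f \<in> M\<close> by (simp add: assignment_def)
  define flip where "flip = FEx 2 (FEx 3 (FConj (opair_fm 0 2 3 4 5 6) (opair_fm 1 3 2 4 5 6)))"
  have sat_flip: "sat M E flip ((\<lambda>_. f)(0 := p, 1 := q)) \<longleftrightarrow>
      (\<exists>a\<in>M. \<exists>z\<in>M. is_opair M E p a z \<and> is_opair M E q z a)" for p q
    by (simp add: flip_def sat_opair_fm)
  have "\<forall>p\<in>M. E p f \<longrightarrow> (\<exists>q\<in>M. sat M E flip ((\<lambda>_. f)(0 := p, 1 := q)))"
    using pairs zf_minus_opair_exists[OF zf] unfolding sat_flip by meson
  then obtain y where y: "y \<in> M" "\<forall>p\<in>M. E p f \<longrightarrow>
      (\<exists>q\<in>M. E q y \<and> (\<exists>a\<in>M. \<exists>z\<in>M. is_opair M E p a z \<and> is_opair M E q z a))"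
    using zf_minus_collection[OF zf s \<open>f \<in> M\<close>, where \<phi>=flip] unfolding sat_flip by blast
  define conv where "conv = FEx 2 (FEx 3 (FConj (opair_fm 0 3 2 4 5 6) (in_graph_fm 7 2 3 8 4 5 6)))"
  have sat_conv: "sat M E conv ((\<lambda>_. f)(0 := q)) \<longleftrightarrow>
      (\<exists>a\<in>M. \<exists>z\<in>M. is_opair M E q z a \<and> in_graph M E f a z)" for q
    by (simp add: conv_def sat_opair_fm sat_in_graph_fm)
  obtain h where h: "h \<in> M" "\<forall>q\<in>M. E q h \<longleftrightarrow>
      (E q y \<and> (\<exists>a\<in>M. \<exists>z\<in>M. is_opair M E q z a \<and> in_graph M E f a z))"
    using zf_minus_separation[OF zf s y(1), of conv] unfolding sat_conv by blast
  have "in_graph M E h z a \<longleftrightarrow> in_graph M E f a z" if "z \<in> M" "a \<in> M" for z a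
  proof
    assume "in_graph M E h z a"
    then obtain q where q: "q \<in> M" "E q h" "is_opair M E q z a" unfolding in_graph_def by blast
    then obtain a' z' where "a' \<in> M" "z' \<in> M" "is_opair M E q z' a'" "in_graph M E f a' z'"
      using h by blast
    then show "in_graph M E f a z" using is_opair_inject[of z M a z' a' E q] q that by blast
  next
    assume fa: "in_graph M E f a z"
    then obtain p where p: "p \<in> M" "E p f" "is_opair M E p a z" unfolding in_graph_def by blast
    then obtain q a' z' where q: "q \<in> M" "E q y" "a' \<in> M" "z' \<in> M"
        "is_opair M E p a' z'" "is_opair M E q z' a'"
      using y by blast
    then have "a' = a" "z' = z" using is_opair_inject[of a M z a' z' E p] p that by blast+
    then show "in_graph M E h z a" using h q fa that unfolding in_graph_def by blast
  qed
  then show ?thesis using h by blast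
qed

lemma converse_is_bijection:
  assumes "is_function M E f" "has_domain M E f d"
    and inj: "\<forall>a\<in>M. \<forall>a'\<in>M. \<forall>z\<in>M. in_graph M E f a z \<and> in_graph M E f a' z \<longrightarrow> a = a'"
    and range: "\<forall>z\<in>M. E z b \<longleftrightarrow> (\<exists>a\<in>M. in_graph M E f a z)"
    and pairs: "\<forall>q\<in>M. E q h \<longrightarrow> (\<exists>z\<in>M. \<exists>a\<in>M. is_opair M E q z a)"
    and conv: "\<forall>z\<in>M. \<forall>a\<in>M. in_graph M E h z a \<longleftrightarrow> in_graph M E f a z"
  shows "is_bijection M E h b d"
  unfolding is_bijection_def
proof (intro conjI)
  show "is_function M E h"
    using pairs conv inj unfolding is_function_def by blast
  show "has_domain M E h b"
    using conv range unfolding has_domain_def by blast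
  show "\<forall>a\<in>M. E a d \<longleftrightarrow> (\<exists>z\<in>M. in_graph M E h z a)"
    using conv assms(2) unfolding has_domain_def by blast
  show "\<forall>z\<in>M. \<forall>z'\<in>M. \<forall>a\<in>M. in_graph M E h z a \<and> in_graph M E h z' a \<longrightarrow> z = z'"
    using conv assms(1) unfolding is_function_def by blast
qed

definition avoids_earlier_values :: "'a set \<Rightarrow> ('a \<Rightarrow> 'a \<Rightarrow> bool) \<Rightarrow> 'a \<Rightarrow> 'a \<Rightarrow> bool" where
  "avoids_earlier_values M E f \<mu> \<longleftrightarrow>
     (\<forall>\<alpha>\<in>M. E \<alpha> \<mu> \<longrightarrow> (\<exists>g\<in>M. \<exists>z\<in>M. in_graph M E f \<alpha> z \<and> is_restriction M E g f \<alpha> \<and>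
        \<not> (\<exists>a\<in>M. in_graph M E g a z)))"

lemma avoids_earlier_values_inj:
  assumes ord: "is_ordinal M E \<mu>" and f: "is_function M E f" "has_domain M E f \<mu>"
    and avoid: "avoids_earlier_values M E f \<mu>"
  shows "\<forall>a\<in>M. \<forall>a'\<in>M. \<forall>z\<in>M. in_graph M E f a z \<and> in_graph M E f a' z \<longrightarrow> a = a'"
proof -
  have single_valued: "z = z'" if "a \<in> M" "z \<in> M" "z' \<in> M"
      "in_graph M E f a z" "in_graph M E f a z'" for a z z'
    using f(1) that unfolding is_function_def by blast
  have not_earlier: "\<not> E a a'" if mem: "a \<in> M" "a' \<in> M" "z \<in> M"
      and fa: "in_graph M E f a z" and fa': "in_graph M E f a' z" for a a' z
  proof
    assume "E a a'"
    have "E a' \<mu>" using f(2) mem fa' unfolding has_domain_def by blast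
    then obtain g z' where g: "g \<in> M" "z' \<in> M" "in_graph M E f a' z'"
        "is_restriction M E g f a'" "\<not> (\<exists>a\<in>M. in_graph M E g a z')"
      using avoid mem(2) unfolding avoids_earlier_values_def by blast
    have "z' = z" using single_valued g mem fa' by blast
    obtain p where p: "p \<in> M" "E p f" "is_opair M E p a z"
      using fa unfolding in_graph_def by blast
    have "E p g" using g(4) p mem fa \<open>E a a'\<close> unfolding is_restriction_def by blast
    then have "in_graph M E g a z" using p unfolding in_graph_def by blast
    then show False using g \<open>z' = z\<close> mem by blast
  qed
  show ?thesis
  proof (intro ballI impI)
    fix a a' z assume "a \<in> M" "a' \<in> M" "z \<in> M" "in_graph M E f a z \<and> in_graph M E f a' z"
    moreover have "E a \<mu>" "E a' \<mu>" using f(2) calculation unfolding has_domain_def by blast+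
    ultimately show "a = a'" using ord not_earlier unfolding is_ordinal_def by metis
  qed
qed

lemma proper_class_nonempty:
  assumes "zf_minus M E" "proper_class M E C"
  shows "\<exists>x\<in>M. C x"
proof -
  obtain e where "e \<in> M" "is_empty M E e" using assms(1) by (auto simp: zf_minus_def)
  then show ?thesis using assms(2) unfolding proper_class_def is_empty_def by blast
qed

lemma proper_class_not_subset:
  assumes "zf_minus M E" "assignment M s" "proper_class M E (\<lambda>x. sat M E \<chi> (s(0 := x)))"
    and "u \<in> M"
  shows "\<exists>x\<in>M. sat M E \<chi> (s(0 := x)) \<and> \<not> E x u"
  using zf_minus_separation[OF assms(1,2,4), of \<chi>] assms(3) unfolding proper_class_def by blast

lemma proper_class_not_in_range:
  assumes "zf_minus M E" "assignment M s" "proper_class M E (\<lambda>x. sat M E \<chi> (s(0 := x)))"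
    and "f \<in> M"
  shows "\<exists>z\<in>M. sat M E \<chi> (s(0 := z)) \<and> \<not> (\<exists>a\<in>M. in_graph M E f a z)"
proof -
  obtain u where "u \<in> M" "\<forall>a z. z \<in> M \<longrightarrow> in_graph M E f a z \<longrightarrow> E z u"
    using zf_minus_range_bounded[OF assms(1,4)] by blast
  then show ?thesis using proper_class_not_subset[OF assms(1-3)] by blast
qed

lemma dc_scheme_avoiding_sequence:
  assumes zf: "zf_minus M E" and dc: "dc_scheme M E \<mu>" and s: "assignment M s"
    and pc: "proper_class M E (\<lambda>x. sat M E \<chi> (s(0 := x)))"
  shows "\<exists>f\<in>M. is_function M E f \<and> has_domain M E f \<mu> \<and> avoids_earlier_values M E f \<mu> \<and>
           (\<forall>\<alpha>\<in>M. \<forall>z\<in>M. in_graph M E f \<alpha> z \<longrightarrow> sat M E \<chi> (s(0 := z)))"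
proof -
  define fresh where "fresh = FNeg (FEx 2 (in_graph_fm 0 2 1 3 4 5 6))"
  have sat_fresh: "sat M E fresh (s(0 := g, 1 := z)) \<longleftrightarrow> \<not> (\<exists>a\<in>M. in_graph M E g a z)" for g z
    by (simp add: fresh_def sat_in_graph_fm)
  obtain f where f: "f \<in> M" "is_function M E f" "has_domain M E f \<mu>"
      "\<forall>\<alpha>\<in>M. E \<alpha> \<mu> \<longrightarrow> (\<exists>g\<in>M. \<exists>z\<in>M. in_graph M E f \<alpha> z \<and> is_restriction M E g f \<alpha> \<and>
          sat M E \<chi> (s(0 := z)) \<and> \<not> (\<exists>a\<in>M. in_graph M E g a z))"
    using spec[OF spec[OF spec[OF dc[unfolded dc_scheme_def], of fresh], of \<chi>], of s] s
      proper_class_nonempty[OF zf pc] proper_class_not_in_range[OF zf s pc]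
    unfolding sat_fresh by blast
  have "sat M E \<chi> (s(0 := z))" if fz: "\<alpha> \<in> M" "z \<in> M" "in_graph M E f \<alpha> z" for \<alpha> z
  proof -
    have "E \<alpha> \<mu>" using f(3) fz unfolding has_domain_def by blast
    then obtain z' where "z' \<in> M" "in_graph M E f \<alpha> z'" "sat M E \<chi> (s(0 := z'))"
      using f(4) fz(1) by blast
    then show ?thesis using f(2) fz unfolding is_function_def by blast
  qed
  moreover have "avoids_earlier_values M E f \<mu>"
    using f(4) unfolding avoids_earlier_values_def by blast
  ultimately show ?thesis using f(1-3) by blast
qed

theorem theorem6p4:
  fixes M :: "'a set" and E :: "'a \<Rightarrow> 'a \<Rightarrow> bool" and \<mu> :: 'a
  assumes "zf_minus M E"
    and "\<mu> \<in> M" and "is_infinite_cardinal M E \<mu>"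
    and "dc_scheme M E \<mu>"
  shows "\<forall>\<chi> s. assignment M s \<longrightarrow> proper_class M E (\<lambda>x. sat M E \<chi> (s(0 := x))) \<longrightarrow>
           (\<exists>b\<in>M. (\<forall>x\<in>M. E x b \<longrightarrow> sat M E \<chi> (s(0 := x))) \<and> equipotent M E b \<mu>)"
proof (intro allI impI)
  fix \<chi> s
  assume s: "assignment M s" and pc: "proper_class M E (\<lambda>x. sat M E \<chi> (s(0 := x)))"
  obtain f where f: "f \<in> M" "is_function M E f" "has_domain M E f \<mu>"
      "avoids_earlier_values M E f \<mu>"
      "\<forall>\<alpha>\<in>M. \<forall>z\<in>M. in_graph M E f \<alpha> z \<longrightarrow> sat M E \<chi> (s(0 := z))"
    using dc_scheme_avoiding_sequence[OF assms(1,4) s pc] by blast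
  have "is_ordinal M E \<mu>"
    using assms(3) by (simp add: is_infinite_cardinal_def is_cardinal_def)
  note inj = avoids_earlier_values_inj[OF this f(2-4)]
  obtain b where b: "b \<in> M" "\<forall>z\<in>M. E z b \<longleftrightarrow> (\<exists>a\<in>M. in_graph M E f a z)"
    using zf_minus_range_exists[OF assms(1) f(1)] by blast
  obtain h where h: "h \<in> M" "\<forall>q\<in>M. E q h \<longrightarrow> (\<exists>z\<in>M. \<exists>a\<in>M. is_opair M E q z a)"
      "\<forall>z\<in>M. \<forall>a\<in>M. in_graph M E h z a \<longleftrightarrow> in_graph M E f a z"
    using zf_minus_converse_exists[OF assms(1) f(1) conjunct1[OF f(2)[unfolded is_function_def]]]
    by blast
  have "equipotent M E b \<mu>"
    using converse_is_bijection[OF f(2,3) inj b(2) h(2,3)] h(1) unfolding equipotent_def by blast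
  then show "\<exists>b\<in>M. (\<forall>x\<in>M. E x b \<longrightarrow> sat M E \<chi> (s(0 := x))) \<and> equipotent M E b \<mu>"
    using b f(5) by blast
qed

end
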